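(* Let $V$ be a finite-dimensional real vector space with filtration $V=V_1\supseteq\cdots\supseteq V_r\supseteq V_{r+1}=\{0\}$, and let $V=\bigoplus_{i=1}^r m_i$ and $V=\bigoplus_{i=1}^r m_i'$ be two decompositions with $V_i=m_i\oplus V_{i+1}=m_i'\oplus V_{i+1}$ for each $i$, with associated dilation groups $(\delta_t)_{t>0}$ and $(\delta_t')_{t>0}$. Let $\phi:V\to V$ be the linear isomorphism whose restriction to each $m_i$ is the projection of $m_i$ onto $m_i'$ along $V_{i+1}$ (so that $\delta'_t=\phi\circ\delta_t\circ\phi^{-1}$). If $|\cdot|'$ is a quasi-norm homogeneous with respect to $(\delta'_t)$, then there is a unique quasi-norm $|\cdot|$ homogeneous with respect to $(\delta_t)$ such that $|x|-|x|'=o(|x|)$ as $|x|\to\infty$; moreover $|x|=|\phi(x)|'$.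
   Context: The dilation group associated to a decomposition $V=\bigoplus m_i$ with $V_i=m_i\oplus V_{i+1}$ is the one-parameter group of linear maps with $\delta_t(x)=t^ix$ for $x\in m_i$. A (homogeneous) quasi-norm associated to $(\delta_t)$ is a continuous function $|\cdot|:V\to[0,\infty)$ such that $|x|=0$ iff $x=0$, and $|\delta_t(x)|=t|x|$ for all $t>0$, $x\in V$. *)

theory Defs
  imports "HOL-Analysis.Analysis"
begin

definition filtration :: "nat \<Rightarrow> (nat \<Rightarrow> 'a::real_vector set) \<Rightarrow> bool" where
  "filtration r V \<longleftrightarrow> V 1 = UNIV \<and> V (Suc r) = {0} \<and>
     (\<forall>i\<in>{1..Suc r}. subspace (V i)) \<and> (\<forall>i\<in>{1..r}. V (Suc i) \<subseteq> V i)"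

definition adapted_decomposition ::
  "nat \<Rightarrow> (nat \<Rightarrow> 'a::real_vector set) \<Rightarrow> (nat \<Rightarrow> 'a set) \<Rightarrow> bool" where
  "adapted_decomposition r V m \<longleftrightarrow>
     (\<forall>i\<in>{1..r}. subspace (m i) \<and> m i \<inter> V (Suc i) = {0} \<and>
        {x + y | x y. x \<in> m i \<and> y \<in> V (Suc i)} = V i)"

definition dilation_group ::
  "nat \<Rightarrow> (nat \<Rightarrow> 'a::real_vector set) \<Rightarrow> (real \<Rightarrow> 'a \<Rightarrow> 'a) \<Rightarrow> bool" where
  "dilation_group r m \<delta> \<longleftrightarrow>
     (\<forall>t>0. linear (\<delta> t) \<and> (\<forall>i\<in>{1..r}. \<forall>x\<in>m i. \<delta> t x = (t ^ i) *\<^sub>R x))"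

definition quasi_norm ::
  "(real \<Rightarrow> 'a::real_normed_vector \<Rightarrow> 'a) \<Rightarrow> ('a \<Rightarrow> real) \<Rightarrow> bool" where
  "quasi_norm \<delta> N \<longleftrightarrow> continuous_on UNIV N \<and> (\<forall>x. N x \<ge> 0) \<and>
     (\<forall>x. N x = 0 \<longleftrightarrow> x = 0) \<and> (\<forall>t>0. \<forall>x. N (\<delta> t x) = t * N x)"

definition little_o_at_infinity :: "('a \<Rightarrow> real) \<Rightarrow> ('a \<Rightarrow> real) \<Rightarrow> bool" where
  "little_o_at_infinity N N' \<longleftrightarrow>
     (\<forall>\<epsilon>>0. \<exists>R. \<forall>x. N x \<ge> R \<longrightarrow> \<bar>N x - N' x\<bar> \<le> \<epsilon> * N x)"

end

theory Submission
  imports Defs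
begin

text \<open>
  Since \<phi> maps each m i into m' i modulo V (i + 1), it preserves the filtration, is injective
  and intertwines the dilations, \<phi> \<circ> \<delta> t = \<delta>' t \<circ> \<phi>; hence N' \<circ> \<phi> is a \<delta>-homogeneous
  quasi-norm. On m k the difference \<delta>' (1/t) (\<delta> t a) - \<phi> a equals t^k \<delta>' (1/t) (a - \<phi> a) with
  a - \<phi> a \<in> V (k + 1), which is O(1/t); so \<delta>' (1/t) \<circ> \<delta> t converges to \<phi>, uniformly on bounded
  sets. Writing x = \<delta> t y with t = N' (\<phi> x), the vector y lies on the unit sphere of N' \<circ> \<phi>,
  which is bounded, and N' x / t = N' (\<delta>' (1/t) (\<delta> t y)) is uniformly close to N' (\<phi> y) = 1:
  this is the little-o estimate. Uniqueness holds because two homogeneous quasi-norms that are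
  both asymptotic to N' can be compared at \<delta> t x for arbitrarily large t.
\<close>

locale adapted_filtration =
  fixes r :: nat and V m :: "nat \<Rightarrow> 'a::real_vector set"
  assumes filtration: "filtration r V"
    and decomposition: "adapted_decomposition r V m"
begin

lemma V_1: "V 1 = UNIV" and V_Suc_r: "V (Suc r) = {0}"
  using filtration by (auto simp: filtration_def)

lemma subspace_V: "k \<in> {1..Suc r} \<Longrightarrow> subspace (V k)"
  using filtration by (auto simp: filtration_def)

lemma V_Suc_subset: "k \<in> {1..r} \<Longrightarrow> V (Suc k) \<subseteq> V k"
  using filtration by (auto simp: filtration_def)

lemma component_inter_V_Suc: "k \<in> {1..r} \<Longrightarrow> m k \<inter> V (Suc k) = {0}"
  using decomposition by (auto simp: adapted_decomposition_def)

lemma V_eq_component_plus: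
  "k \<in> {1..r} \<Longrightarrow> V k = {a + b | a b. a \<in> m k \<and> b \<in> V (Suc k)}"
  using decomposition by (auto simp: adapted_decomposition_def)

lemma component_subset_V: "k \<in> {1..r} \<Longrightarrow> m k \<subseteq> V k"
  using V_eq_component_plus subspace_0[OF subspace_V, of "Suc k"] by force

lemma V_induct[consumes 2, case_names zero step]:
  assumes "k \<in> {1..Suc r}" "y \<in> V k"
    and zero: "P (Suc r) 0"
    and step: "\<And>k a b. k \<in> {1..r} \<Longrightarrow> a \<in> m k \<Longrightarrow> b \<in> V (Suc k) \<Longrightarrow> P (Suc k) b \<Longrightarrow> P k (a + b)"
  shows "P k y"
  using assms(1,2)
proof (induction "Suc r - k" arbitrary: k y)
  case 0
  then show ?case using zero V_Suc_r by auto
next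
  case (Suc j)
  then have k: "k \<in> {1..r}" by auto
  then obtain a b where "a \<in> m k" "b \<in> V (Suc k)" "y = a + b"
    using Suc.prems(2) V_eq_component_plus by blast
  with Suc.hyps(1)[of "Suc k" b] Suc.hyps(2) k show ?case by (auto intro: step)
qed

lemma component_induct[case_names zero step]:
  assumes "P 0" and "\<And>k a b. k \<in> {1..r} \<Longrightarrow> a \<in> m k \<Longrightarrow> P b \<Longrightarrow> P (a + b)"
  shows "P y"
proof -
  have "1 \<in> {1..Suc r}" "y \<in> V 1" using V_1 by auto
  then show ?thesis by (induction rule: V_induct) (use assms in auto)
qed

lemma linear_eq_on_components:
  assumes "linear f" "linear g" and "\<And>k x. k \<in> {1..r} \<Longrightarrow> x \<in> m k \<Longrightarrow> f x = g x"
  shows "f = g"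
proof
  fix y show "f y = g y"
    by (induction y rule: component_induct)
      (simp_all add: assms linear_0 linear_add)
qed

lemma linear_family_tendsto_0:
  fixes L :: "'b \<Rightarrow> 'a \<Rightarrow> 'c::real_normed_vector"
  assumes lin: "\<forall>\<^sub>F t in F. linear (L t)"
    and lim: "\<And>k a. k \<in> {1..r} \<Longrightarrow> a \<in> m k \<Longrightarrow> ((\<lambda>t. L t a) \<longlongrightarrow> 0) F"
  shows "((\<lambda>t. L t y) \<longlongrightarrow> 0) F"
proof (induction y rule: component_induct)
  case zero
  show ?case
    using lin by (rule tendsto_eventually[OF eventually_mono]) (simp add: linear_0)
next
  case (step k a b)
  have "\<forall>\<^sub>F t in F. L t a + L t b = L t (a + b)"
    using lin by (rule eventually_mono) (simp add: linear_add)
  then show ?case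
    using tendsto_add[OF lim[OF step(1,2)] step(3)] by (simp add: tendsto_cong)
qed

end

locale graded_dilation = adapted_filtration r V m
  for r and V m :: "nat \<Rightarrow> 'a::real_normed_vector set" +
  fixes \<delta> :: "real \<Rightarrow> 'a \<Rightarrow> 'a"
  assumes dilation: "dilation_group r m \<delta>"
begin

lemma linear_dilation: "t > 0 \<Longrightarrow> linear (\<delta> t)"
  using dilation by (simp add: dilation_group_def)

lemma dilation_component: "t > 0 \<Longrightarrow> k \<in> {1..r} \<Longrightarrow> x \<in> m k \<Longrightarrow> \<delta> t x = t ^ k *\<^sub>R x"
  using dilation by (simp add: dilation_group_def)

lemma dilation_1: "\<delta> 1 x = x"
proof -
  have "\<delta> 1 = id"
    by (rule linear_eq_on_components) (simp_all add: linear_dilation dilation_component linear_id)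
  then show ?thesis by simp
qed

lemma dilation_mult:
  assumes "s > 0" "t > 0"
  shows "\<delta> s (\<delta> t x) = \<delta> (s * t) x"
proof -
  have "\<delta> s \<circ> \<delta> t = \<delta> (s * t)"
  proof (rule linear_eq_on_components)
    show "linear (\<delta> s \<circ> \<delta> t)" "linear (\<delta> (s * t))"
      using assms by (simp_all add: linear_compose linear_dilation)
    show "(\<delta> s \<circ> \<delta> t) x = \<delta> (s * t) x" if "k \<in> {1..r}" "x \<in> m k" for k x
      using that assms
      by (simp add: dilation_component linear_scale[OF linear_dilation] power_mult_distrib)
  qed
  then show ?thesis by (metis comp_apply)
qed

lemma dilation_dilation_inverse: "t > 0 \<Longrightarrow> \<delta> t (\<delta> (1 / t) x) = x"
  by (simp add: dilation_mult dilation_1)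

text \<open>\<delta> s x is a polynomial in s without constant term, with coefficients the components of x.\<close>
lemma dilation_continuous_extension:
  "\<exists>f. continuous_on UNIV f \<and> f 0 = 0 \<and> (\<forall>s>0. f s = \<delta> s x)"
proof (induction x rule: component_induct)
  case zero
  show ?case
    by (rule exI[of _ "\<lambda>_. 0"]) (simp add: linear_0 linear_dilation)
next
  case (step k a b)
  then obtain g where g: "continuous_on UNIV g" "g 0 = 0" "\<forall>s>0. g s = \<delta> s b" by blast
  show ?case
  proof (intro exI conjI allI impI)
    show "continuous_on UNIV (\<lambda>s. s ^ k *\<^sub>R a + g s)"
      by (intro continuous_intros g(1))
    show "(0::real) ^ k *\<^sub>R a + g 0 = 0" using step(1) g(2) by simp
    show "s ^ k *\<^sub>R a + g s = \<delta> s (a + b)" if "s > 0" for s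
      using that g(3) step(1,2) by (simp add: dilation_component linear_add[OF linear_dilation])
  qed
qed

lemma dilation_inverse_tendsto_0:
  assumes "k \<in> {1..Suc r}" "v \<in> V k"
  shows "((\<lambda>t. t ^ (k - 1) *\<^sub>R \<delta> (1 / t) v) \<longlongrightarrow> 0) at_top"
  using assms
proof (induction rule: V_induct)
  case zero
  have "\<forall>\<^sub>F t in at_top. t ^ (Suc r - 1) *\<^sub>R \<delta> (1 / t) 0 = (0::'a)"
    using eventually_gt_at_top[of "0::real"] by (rule eventually_mono) (simp add: linear_0 linear_dilation)
  then show ?case by (rule tendsto_eventually)
next
  case (step k a b)
  then obtain j where k: "k = Suc j" by (cases k) auto
  have "((\<lambda>t. inverse t *\<^sub>R a + inverse t *\<^sub>R (t ^ k *\<^sub>R \<delta> (1 / t) b)) \<longlongrightarrow> 0 *\<^sub>R a + 0 *\<^sub>R 0) at_top"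
    using step.IH by (intro tendsto_intros tendsto_inverse_0_at_top filterlim_ident) simp_all
  moreover have "\<forall>\<^sub>F t in at_top.
      inverse t *\<^sub>R a + inverse t *\<^sub>R (t ^ k *\<^sub>R \<delta> (1 / t) b) = t ^ (k - 1) *\<^sub>R \<delta> (1 / t) (a + b)"
    using eventually_gt_at_top[of "0::real"]
  proof (rule eventually_mono)
    fix t :: real assume t: "t > 0"
    have "\<delta> (1 / t) (a + b) = (1 / t) ^ k *\<^sub>R a + \<delta> (1 / t) b"
      using t step.hyps(1,2) by (simp add: dilation_component linear_add[OF linear_dilation])
    moreover have "t ^ (k - 1) * (1 / t) ^ k = inverse t" "inverse t * t ^ k = t ^ (k - 1)"
      using t by (simp_all add: k power_one_over field_simps)
    ultimately show "inverse t *\<^sub>R a + inverse t *\<^sub>R (t ^ k *\<^sub>R \<delta> (1 / t) b) = t ^ (k - 1) *\<^sub>R \<delta> (1 / t) (a + b)"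
      by (simp add: scaleR_add_right)
  qed
  ultimately show ?case by (simp add: tendsto_cong)
qed

end

locale graded_dilation_pair =
  graded_dilation r V m \<delta> + D': graded_dilation r V m' \<delta>'
  for r and V :: "nat \<Rightarrow> 'a::real_normed_vector set" and m \<delta> m' \<delta>' +
  fixes \<phi> :: "'a \<Rightarrow> 'a"
  assumes linear_\<phi>: "linear \<phi>"
    and \<phi>_component: "\<And>k x. k \<in> {1..r} \<Longrightarrow> x \<in> m k \<Longrightarrow> \<phi> x \<in> m' k \<and> x - \<phi> x \<in> V (Suc k)"
begin

lemma \<phi>_V: "k \<in> {1..Suc r} \<Longrightarrow> y \<in> V k \<Longrightarrow> \<phi> y \<in> V k"
proof (induction rule: V_induct)
  case zero
  show ?case using V_Suc_r by (simp add: linear_0[OF linear_\<phi>])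
next
  case (step k a b)
  have "\<phi> a \<in> V k"
    using \<phi>_component[OF step.hyps(1,2)] D'.component_subset_V[OF step.hyps(1)] by blast
  moreover have "\<phi> b \<in> V k"
    using step.IH V_Suc_subset[OF step.hyps(1)] by blast
  ultimately show ?case
    using step.hyps(1) subspace_V[of k] by (simp add: linear_add[OF linear_\<phi>] subspace_add)
qed

lemma inj_\<phi>: "inj \<phi>"
proof -
  have "\<phi> y = 0 \<longrightarrow> y = 0" if "k \<in> {1..Suc r}" "y \<in> V k" for k y
    using that
  proof (induction rule: V_induct)
    case (step k a b)
    show ?case
    proof
      assume sum0: "\<phi> (a + b) = 0"
      have k: "Suc k \<in> {1..Suc r}" using step.hyps(1) by simp
      have "- \<phi> b \<in> V (Suc k)"
        using \<phi>_V[OF k step.hyps(3)] subspace_V[OF k] by (simp add: subspace_neg)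
      moreover have "\<phi> a = - \<phi> b"
        using sum0 by (simp add: linear_add[OF linear_\<phi>] eq_neg_iff_add_eq_0)
      ultimately have "\<phi> a \<in> m' k \<inter> V (Suc k)"
        using \<phi>_component[OF step.hyps(1,2)] by simp
      then have "\<phi> a = 0"
        using D'.component_inter_V_Suc[OF step.hyps(1)] by blast
      then have "a \<in> m k \<inter> V (Suc k)"
        using \<phi>_component[OF step.hyps(1,2)] step.hyps(2) by simp
      then have "a = 0"
        using component_inter_V_Suc[OF step.hyps(1)] by blast
      then show "a + b = 0" using sum0 step.IH by simp
    qed
  qed simp
  then show ?thesis
    using V_1 by (auto simp: linear_inj_iff_eq_0[OF linear_\<phi>])
qed

lemma \<phi>_dilation: "t > 0 \<Longrightarrow> \<phi> (\<delta> t x) = \<delta>' t (\<phi> x)"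
proof -
  assume t: "t > 0"
  have "\<phi> \<circ> \<delta> t = \<delta>' t \<circ> \<phi>"
  proof (rule linear_eq_on_components)
    show "linear (\<phi> \<circ> \<delta> t)" "linear (\<delta>' t \<circ> \<phi>)"
      using t linear_dilation D'.linear_dilation linear_\<phi> by (auto intro: linear_compose)
    fix k x assume k: "k \<in> {1..r}" and x: "x \<in> m k"
    have "\<phi> (\<delta> t x) = t ^ k *\<^sub>R \<phi> x"
      using dilation_component[OF t k x] by (simp add: linear_scale[OF linear_\<phi>])
    also have "\<dots> = \<delta>' t (\<phi> x)"
      using D'.dilation_component[OF t k] \<phi>_component[OF k x] by simp
    finally show "(\<phi> \<circ> \<delta> t) x = (\<delta>' t \<circ> \<phi>) x" by simp
  qed
  then show ?thesis by (metis comp_apply)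
qed

lemma conjugate_dilation_tendsto: "((\<lambda>t. \<delta>' (1 / t) (\<delta> t x)) \<longlongrightarrow> \<phi> x) at_top"
proof -
  let ?L = "\<lambda>t y. \<delta>' (1 / t) (\<delta> t y) - \<phi> y"
  have "((\<lambda>t. ?L t x) \<longlongrightarrow> 0) at_top"
  proof (rule linear_family_tendsto_0[where L = ?L])
    have "linear (?L t)" if "t > 0" for t
      using that linear_compose[OF linear_dilation D'.linear_dilation, of t "1 / t"]
      by (intro linear_compose_sub linear_\<phi>) (simp_all add: o_def)
    then show "\<forall>\<^sub>F t in at_top. linear (?L t)"
      by (blast intro: eventually_mono[OF eventually_gt_at_top[of 0]])
    fix k a assume k: "k \<in> {1..r}" and a: "a \<in> m k"
    have "Suc k \<in> {1..Suc r}" "a - \<phi> a \<in> V (Suc k)" using k \<phi>_component[OF k a] by auto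
    from D'.dilation_inverse_tendsto_0[OF this]
    have "((\<lambda>t. t ^ k *\<^sub>R \<delta>' (1 / t) (a - \<phi> a)) \<longlongrightarrow> 0) at_top" by simp
    moreover have "\<forall>\<^sub>F t in at_top. t ^ k *\<^sub>R \<delta>' (1 / t) (a - \<phi> a) = ?L t a"
      using eventually_gt_at_top[of "0::real"]
    proof (rule eventually_mono)
      fix t :: real assume t: "t > 0"
      have lin: "linear (\<delta>' (1 / t))" using t D'.linear_dilation by simp
      have "\<delta>' (1 / t) (\<phi> a) = (1 / t) ^ k *\<^sub>R \<phi> a"
        using t D'.dilation_component[OF _ k] \<phi>_component[OF k a] by simp
      then have "t ^ k *\<^sub>R \<delta>' (1 / t) (\<phi> a) = \<phi> a"
        using t by (simp add: power_one_over)
      moreover have "\<delta> t a = t ^ k *\<^sub>R a" using dilation_component[OF t k a] .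
      ultimately show "t ^ k *\<^sub>R \<delta>' (1 / t) (a - \<phi> a) = ?L t a"
        by (simp add: linear_diff[OF lin] linear_scale[OF lin] scaleR_diff_right)
    qed
    ultimately show "((\<lambda>t. ?L t a) \<longlongrightarrow> 0) at_top" by (simp add: tendsto_cong)
  qed
  then show ?thesis by (rule LIM_zero_cancel)
qed

end

lemma quasi_norm_little_o_unique:
  assumes qn1: "quasi_norm \<delta> N1" and qn2: "quasi_norm \<delta> N2"
    and o1: "little_o_at_infinity N1 N'" and o2: "little_o_at_infinity N2 N'"
  shows "N1 = N2"
proof
  fix x
  show "N1 x = N2 x"
  proof (cases "x = 0")
    case True
    then show ?thesis using qn1 qn2 unfolding quasi_norm_def by metis
  next
    case False
    then have pos: "N1 x > 0" "N2 x > 0"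
      using qn1 qn2 by (auto simp: quasi_norm_def order_less_le)
    have "\<bar>N1 x - N2 x\<bar> \<le> e" if "e > 0" for e
    proof -
      define \<epsilon> where "\<epsilon> = e / (N1 x + N2 x)"
      have "\<epsilon> > 0" using pos that by (simp add: \<epsilon>_def)
      then obtain R1 R2 where
        R1: "\<And>y. R1 \<le> N1 y \<Longrightarrow> \<bar>N1 y - N' y\<bar> \<le> \<epsilon> * N1 y" and
        R2: "\<And>y. R2 \<le> N2 y \<Longrightarrow> \<bar>N2 y - N' y\<bar> \<le> \<epsilon> * N2 y"
        using o1 o2 unfolding little_o_at_infinity_def by meson
      define t where "t = max 1 (max (R1 / N1 x) (R2 / N2 x))"
      have "R1 / N1 x \<le> t" "R2 / N2 x \<le> t" by (simp_all add: t_def)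
      then have t: "t > 0" "R1 \<le> t * N1 x" "R2 \<le> t * N2 x"
        using pos by (simp_all add: t_def divide_le_eq)
      have "N1 (\<delta> t x) = t * N1 x" "N2 (\<delta> t x) = t * N2 x"
        using qn1 qn2 t(1) by (simp_all add: quasi_norm_def)
      then have "\<bar>t * N1 x - N' (\<delta> t x)\<bar> \<le> \<epsilon> * (t * N1 x)"
        "\<bar>t * N2 x - N' (\<delta> t x)\<bar> \<le> \<epsilon> * (t * N2 x)"
        using R1[of "\<delta> t x"] R2[of "\<delta> t x"] t by simp_all
      then have "\<bar>t * N1 x - t * N2 x\<bar> \<le> \<epsilon> * (t * N1 x) + \<epsilon> * (t * N2 x)"
        by linarith
      moreover have "\<bar>t * N1 x - t * N2 x\<bar> = t * \<bar>N1 x - N2 x\<bar>"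
        using t(1) by (simp add: abs_mult flip: right_diff_distrib)
      ultimately have "t * \<bar>N1 x - N2 x\<bar> \<le> t * (\<epsilon> * (N1 x + N2 x))"
        by (simp add: distrib_left mult.left_commute)
      then show ?thesis
        using t(1) pos by (simp add: \<epsilon>_def)
    qed
    then show ?thesis
      using field_le_epsilon[of "\<bar>N1 x - N2 x\<bar>" 0] by simp
  qed
qed

text \<open>If norm z \<ge> 1, the path of dilates from 0 to z meets the unit sphere at some s \<le> 1,
  where c \<le> N (\<delta> s z) = s * N z \<le> N z.\<close>
lemma quasi_norm_below_sphere_bound_imp_norm_less_1:
  assumes qn: "quasi_norm \<delta> N"
    and one: "\<delta> 1 z = z"
    and path: "\<exists>f. continuous_on UNIV f \<and> f 0 = 0 \<and> (\<forall>s>0. f s = \<delta> s z)"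
    and sphere: "\<And>y. norm y = 1 \<Longrightarrow> c \<le> N y"
    and "N z < c"
  shows "norm z < 1"
proof (rule ccontr)
  assume "\<not> norm z < 1"
  obtain f where f: "continuous_on UNIV f" "f 0 = 0" "\<And>s. s > 0 \<Longrightarrow> f s = \<delta> s z"
    using path by blast
  have "continuous_on {0..1} (\<lambda>s. norm (f s))"
    by (intro continuous_on_norm continuous_on_subset[OF f(1)]) auto
  moreover have "norm (f 1) \<ge> 1" using f(3)[of 1] one \<open>\<not> norm z < 1\<close> by simp
  ultimately obtain s where s: "0 \<le> s" "s \<le> 1" "norm (f s) = 1"
    using IVT'[of "\<lambda>s. norm (f s)" 0 1 1] f(2) by auto
  then have "s > 0" using f(2) by (cases "s = 0") auto
  then have "c \<le> N (\<delta> s z)" using sphere s(3) f(3) by simp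
  also have "\<dots> = s * N z" using qn \<open>s > 0\<close> by (simp add: quasi_norm_def)
  also have "\<dots> \<le> N z" using s qn by (simp add: quasi_norm_def mult_left_le_one_le)
  finally show False using \<open>N z < c\<close> by simp
qed

lemma quasi_norm_sublevel_bounded:
  fixes \<delta> :: "real \<Rightarrow> 'a::euclidean_space \<Rightarrow> 'a"
  assumes qn: "quasi_norm \<delta> N"
    and lin: "\<And>t. t > 0 \<Longrightarrow> linear (\<delta> t)"
    and one: "\<And>x. \<delta> 1 x = x"
    and inverse: "\<And>t x. t > 0 \<Longrightarrow> \<delta> t (\<delta> (1 / t) x) = x"
    and path: "\<And>x. \<exists>f. continuous_on UNIV f \<and> f 0 = 0 \<and> (\<forall>s>0. f s = \<delta> s x)"
  shows "bounded {x. N x \<le> 1}"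
proof -
  have "sphere (0::'a) 1 \<noteq> {}"
    using nonempty_Basis by (auto simp: norm_Basis)
  moreover have "continuous_on (sphere 0 1) N"
    using qn continuous_on_subset[of UNIV N] by (auto simp: quasi_norm_def)
  ultimately obtain x0 where x0: "x0 \<in> sphere 0 1" "\<And>y. y \<in> sphere 0 1 \<Longrightarrow> N x0 \<le> N y"
    using continuous_attains_inf[OF compact_sphere] by blast
  define c where "c = N x0"
  have "x0 \<noteq> 0" using x0(1) by auto
  then have c: "c > 0"
    using qn unfolding c_def quasi_norm_def by (simp add: order_less_le)
  have small: "norm z < 1" if "N z < c" for z
    using qn one path _ that by (rule quasi_norm_below_sphere_bound_imp_norm_less_1) (simp add: c_def x0(2))
  obtain B where B: "\<And>x. norm (\<delta> (2 / c) x) \<le> B * norm x"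
    using linear_bounded[OF lin[of "2 / c"]] c by auto
  have "norm y \<le> \<bar>B\<bar>" if "N y \<le> 1" for y
  proof -
    have "N (\<delta> (c / 2) y) = c / 2 * N y" using qn c by (simp add: quasi_norm_def)
    also have "\<dots> < c" using that c by simp
    finally have "norm (\<delta> (c / 2) y) < 1" by (rule small)
    have "y = \<delta> (2 / c) (\<delta> (c / 2) y)" using inverse[of "2 / c" y] c by simp
    then have "norm y \<le> B * norm (\<delta> (c / 2) y)" using B by metis
    also have "\<dots> \<le> \<bar>B\<bar> * 1"
      using \<open>norm (\<delta> (c / 2) y) < 1\<close> by (intro mult_mono) auto
    finally show "norm y \<le> \<bar>B\<bar>" by simp
  qed
  then show ?thesis unfolding bounded_iff by blast
qed

lemma linear_pointwise_tendsto_0_uniform: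
  fixes L :: "'b \<Rightarrow> 'a::euclidean_space \<Rightarrow> 'c::real_normed_vector"
  assumes lin: "\<forall>\<^sub>F t in F. linear (L t)"
    and lim: "\<And>y. ((\<lambda>t. L t y) \<longlongrightarrow> 0) F"
    and "e > 0"
  shows "\<forall>\<^sub>F t in F. \<forall>y. norm (L t y) \<le> e * norm y"
proof -
  have "((\<lambda>t. \<Sum>b\<in>Basis. norm (L t b)) \<longlongrightarrow> 0) F"
    using tendsto_sum[of Basis "\<lambda>b t. norm (L t b)" "\<lambda>_. 0"] tendsto_norm_zero[OF lim] by simp
  then have "\<forall>\<^sub>F t in F. (\<Sum>b\<in>Basis. norm (L t b)) < e"
    using \<open>e > 0\<close> by (rule order_tendstoD)
  with lin show ?thesis
  proof (rule eventually_elim2, intro allI)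
    fix t y assume "linear (L t)" and small: "(\<Sum>b\<in>Basis. norm (L t b)) < e"
    then have "bounded_linear (L t)" by (simp add: linear_conv_bounded_linear)
    then have "norm (L t y) \<le> onorm (L t) * norm y" by (rule onorm)
    also have "\<dots> \<le> e * norm y"
      using onorm_componentwise[OF \<open>bounded_linear (L t)\<close>] small by (intro mult_right_mono) auto
    finally show "norm (L t y) \<le> e * norm y" .
  qed
qed

lemma quasi_norm_compose_linear:
  fixes \<phi> :: "'a::euclidean_space \<Rightarrow> 'b::real_normed_vector"
  assumes qn': "quasi_norm \<delta>' N'" and "linear \<phi>" "inj \<phi>"
    and commute: "\<And>t x. t > 0 \<Longrightarrow> \<phi> (\<delta> t x) = \<delta>' t (\<phi> x)"
  shows "quasi_norm \<delta> (\<lambda>x. N' (\<phi> x))"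
  unfolding quasi_norm_def
proof (intro conjI allI impI)
  have "continuous_on UNIV \<phi>"
    using \<open>linear \<phi>\<close> by (simp add: linear_continuous_on linear_conv_bounded_linear)
  then show "continuous_on UNIV (\<lambda>x. N' (\<phi> x))"
    using qn' by (auto simp: quasi_norm_def intro: continuous_on_compose2)
  show "N' (\<phi> x) = 0 \<longleftrightarrow> x = 0" for x
    using qn' \<open>inj \<phi>\<close> linear_0[OF \<open>linear \<phi>\<close>]
    by (auto simp: quasi_norm_def linear_inj_iff_eq_0[OF \<open>linear \<phi>\<close>])
  show "0 \<le> N' (\<phi> x)" for x using qn' by (simp add: quasi_norm_def)
  show "N' (\<phi> (\<delta> t x)) = t * N' (\<phi> x)" if "t > 0" for t x
    using qn' that by (simp add: quasi_norm_def commute)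
qed

lemma linear_tendsto_uniform_on_bounded_continuous:
  fixes C :: "'d \<Rightarrow> 'a::euclidean_space \<Rightarrow> 'b::euclidean_space" and g :: "'b \<Rightarrow> 'c::metric_space"
  assumes "continuous_on UNIV g" "bounded S" "linear \<phi>"
    and lin: "\<forall>\<^sub>F t in F. linear (C t)"
    and lim: "\<And>y. ((\<lambda>t. C t y) \<longlongrightarrow> \<phi> y) F"
    and "\<epsilon> > 0"
  shows "\<forall>\<^sub>F t in F. \<forall>y\<in>S. dist (g (C t y)) (g (\<phi> y)) < \<epsilon>"
proof -
  obtain M where M: "M > 0" "\<And>y. y \<in> S \<Longrightarrow> norm y \<le> M"
    using \<open>bounded S\<close> by (auto simp: bounded_pos)
  obtain B where B: "B > 0" "\<And>y. norm (\<phi> y) \<le> B * norm y"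
    using linear_bounded_pos[OF \<open>linear \<phi>\<close>] by blast
  define K where "K = cball (0::'b) (B * M + 1)"
  have "uniformly_continuous_on K g"
    using continuous_on_subset[OF \<open>continuous_on UNIV g\<close>, of K]
    by (simp add: K_def compact_uniformly_continuous)
  then obtain \<eta> where \<eta>: "\<eta> > 0"
    "\<And>u v. u \<in> K \<Longrightarrow> v \<in> K \<Longrightarrow> dist u v < \<eta> \<Longrightarrow> dist (g u) (g v) < \<epsilon>"
    unfolding uniformly_continuous_on_def using \<open>\<epsilon> > 0\<close> by metis
  define e where "e = min \<eta> 1 / (2 * M)"
  have "e > 0" using \<eta>(1) M(1) by (simp add: e_def)
  have "\<forall>\<^sub>F t in F. \<forall>y. norm (C t y - \<phi> y) \<le> e * norm y"
  proof (rule linear_pointwise_tendsto_0_uniform[OF _ _ \<open>e > 0\<close>])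
    show "\<forall>\<^sub>F t in F. linear (\<lambda>y. C t y - \<phi> y)"
      using lin by (rule eventually_mono) (intro linear_compose_sub \<open>linear \<phi>\<close>)
    show "((\<lambda>t. C t y - \<phi> y) \<longlongrightarrow> 0) F" for y
      using lim[of y] by (rule LIM_zero)
  qed
  then show ?thesis
  proof (rule eventually_mono, intro ballI)
    fix t y assume unif: "\<forall>y. norm (C t y - \<phi> y) \<le> e * norm y" and "y \<in> S"
    have "norm (C t y - \<phi> y) \<le> e * M"
      using unif M(2)[OF \<open>y \<in> S\<close>] \<open>e > 0\<close> by (meson mult_left_mono order_trans less_imp_le)
    also have "\<dots> = min \<eta> 1 / 2" using M(1) by (simp add: e_def)
    also have "\<dots> < min \<eta> 1" using \<eta>(1) by (simp add: min_def)
    finally have close: "norm (C t y - \<phi> y) < min \<eta> 1" .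
    have "norm (\<phi> y) \<le> B * M"
      using B M(2)[OF \<open>y \<in> S\<close>] by (meson mult_left_mono order_trans less_imp_le)
    then have "\<phi> y \<in> K" "C t y \<in> K"
      using close norm_triangle_sub[of "C t y" "\<phi> y"] by (auto simp: K_def)
    then show "dist (g (C t y)) (g (\<phi> y)) < \<epsilon>"
      using \<eta>(2) close by (simp add: dist_norm)
  qed
qed

lemma little_o_at_infinity_compose:
  fixes N' :: "'a::euclidean_space \<Rightarrow> real" and \<phi> :: "'a \<Rightarrow> 'a"
  assumes qn': "quasi_norm \<delta>' N'" and qn: "quasi_norm \<delta> (\<lambda>x. N' (\<phi> x))"
    and lin: "\<And>t. t > 0 \<Longrightarrow> linear (\<delta> t)" "\<And>t. t > 0 \<Longrightarrow> linear (\<delta>' t)" "linear \<phi>"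
    and inverse: "\<And>t x. t > 0 \<Longrightarrow> \<delta> t (\<delta> (1 / t) x) = x"
    and bdd: "bounded {x. N' (\<phi> x) \<le> 1}"
    and conj: "\<And>x. ((\<lambda>t. \<delta>' (1 / t) (\<delta> t x)) \<longlongrightarrow> \<phi> x) at_top"
  shows "little_o_at_infinity (\<lambda>x. N' (\<phi> x)) N'"
  unfolding little_o_at_infinity_def
proof (intro allI impI)
  fix \<epsilon> :: real assume "\<epsilon> > 0"
  have "continuous_on UNIV N'" using qn' by (simp add: quasi_norm_def)
  moreover have "\<forall>\<^sub>F t in at_top. linear (\<delta>' (1 / t) \<circ> \<delta> t)"
    using eventually_gt_at_top[of "0::real"] by (rule eventually_mono) (simp add: linear_compose lin)
  moreover have "((\<lambda>t. (\<delta>' (1 / t) \<circ> \<delta> t) y) \<longlongrightarrow> \<phi> y) at_top" for y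
    using conj[of y] by simp
  ultimately have "\<forall>\<^sub>F t in at_top. \<forall>y\<in>{y. N' (\<phi> y) \<le> 1}.
      dist (N' ((\<delta>' (1 / t) \<circ> \<delta> t) y)) (N' (\<phi> y)) < \<epsilon>"
    using bdd lin(3) \<open>\<epsilon> > 0\<close> by (intro linear_tendsto_uniform_on_bounded_continuous)
  then obtain R where R: "\<And>t y. t \<ge> R \<Longrightarrow> N' (\<phi> y) \<le> 1 \<Longrightarrow> \<bar>N' (\<delta>' (1 / t) (\<delta> t y)) - N' (\<phi> y)\<bar> < \<epsilon>"
    by (auto simp: eventually_at_top_linorder dist_real_def)
  show "\<exists>R. \<forall>x. R \<le> N' (\<phi> x) \<longrightarrow> \<bar>N' (\<phi> x) - N' x\<bar> \<le> \<epsilon> * N' (\<phi> x)"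
  proof (intro exI allI impI)
    fix x assume x: "max R 1 \<le> N' (\<phi> x)"
    define t where "t = N' (\<phi> x)"
    have t: "t \<ge> R" "t > 0" using x by (auto simp: t_def)
    define y where "y = \<delta> (1 / t) x"
    have "N' (\<phi> y) = 1 / t * t"
      using qn t(2) unfolding quasi_norm_def y_def t_def by simp
    then have "N' (\<phi> y) = 1" using t(2) by simp
    moreover have "\<delta> t y = x" using inverse[OF t(2)] by (simp add: y_def)
    ultimately have "\<bar>N' (\<delta>' (1 / t) x) - 1\<bar> < \<epsilon>" using R[OF t(1), of y] by simp
    moreover have "N' (\<delta>' (1 / t) x) = N' x / t" using qn' t(2) by (simp add: quasi_norm_def)
    ultimately have "\<bar>1 - N' x / t\<bar> \<le> \<epsilon>" by simp
    moreover have "t - N' x = t * (1 - N' x / t)" using t(2) by (simp add: field_simps)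
    ultimately have "\<bar>t - N' x\<bar> \<le> t * \<epsilon>"
      using t(2) by (simp add: abs_mult)
    then show "\<bar>N' (\<phi> x) - N' x\<bar> \<le> \<epsilon> * N' (\<phi> x)"
      by (simp add: t_def mult.commute)
  qed
qed

theorem proposition2p6:
  fixes r :: nat
    and V m m' :: "nat \<Rightarrow> 'a::euclidean_space set"
    and \<delta> \<delta>' :: "real \<Rightarrow> 'a \<Rightarrow> 'a"
    and \<phi> :: "'a \<Rightarrow> 'a"
    and N' :: "'a \<Rightarrow> real"
  assumes "1 \<le> r"
    and "filtration r V"
    and "adapted_decomposition r V m"
    and "adapted_decomposition r V m'"
    and "dilation_group r m \<delta>"
    and "dilation_group r m' \<delta>'"
    and "linear \<phi>"
    and "\<forall>i\<in>{1..r}. \<forall>x\<in>m i. \<phi> x \<in> m' i \<and> x - \<phi> x \<in> V (Suc i)"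
    and "quasi_norm \<delta>' N'"
  shows "(\<exists>!N. quasi_norm \<delta> N \<and> little_o_at_infinity N N') \<and>
         (\<forall>N. quasi_norm \<delta> N \<and> little_o_at_infinity N N' \<longrightarrow> N = (\<lambda>x. N' (\<phi> x)))"
proof -
  interpret graded_dilation_pair r V m \<delta> m' \<delta>' \<phi>
    using assms(2-8)
    by (simp add: graded_dilation_pair_def graded_dilation_pair_axioms_def graded_dilation_def
        graded_dilation_axioms_def adapted_filtration_def)
  define N where "N = (\<lambda>x. N' (\<phi> x))"
  have qn: "quasi_norm \<delta> N"
    unfolding N_def using assms(9) linear_\<phi> inj_\<phi> \<phi>_dilation by (rule quasi_norm_compose_linear)
  have bdd: "bounded {x. N x \<le> 1}"
    using qn linear_dilation dilation_1 dilation_dilation_inverse dilation_continuous_extension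
    by (rule quasi_norm_sublevel_bounded)
  have "little_o_at_infinity N N'"
    unfolding N_def
    by (rule little_o_at_infinity_compose[OF assms(9) qn[unfolded N_def] linear_dilation
          D'.linear_dilation linear_\<phi> dilation_dilation_inverse bdd[unfolded N_def]
          conjugate_dilation_tendsto])
  with qn quasi_norm_little_o_unique[of \<delta> _ N N'] show ?thesis
    unfolding N_def[symmetric] by blast
qed

end
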